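(* Let $G$ be a finitely generated group such that $[e]_g$ is a subgroup of $G$ for every $g\in G$. If $G$ satisfies the descending chain condition for normal subgroups, then $G$ is nilpotent.
   Context: $[x,y]=x^{-1}y^{-1}xy$; $[e]_g=\{[x,g]\mid x\in G\}$. The descending chain condition for normal subgroups (Min-n) means: for every chain $H_1\ge H_2\ge H_3\ge\dots$ of normal subgroups of $G$ there exists $m$ with $H_m=H_{m+1}=\cdots$. *)

theory Defs
  imports "HOL-Algebra.Algebra"
begin

definition commutator :: "('a, 'b) monoid_scheme \<Rightarrow> 'a \<Rightarrow> 'a \<Rightarrow> 'a" where
  "commutator G x y = inv\<^bsub>G\<^esub> x \<otimes>\<^bsub>G\<^esub> inv\<^bsub>G\<^esub> y \<otimes>\<^bsub>G\<^esub> x \<otimes>\<^bsub>G\<^esub> y"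

text \<open>The set [e]_g = { [x,g] | x in G }.\<close>
definition commutator_class :: "('a, 'b) monoid_scheme \<Rightarrow> 'a \<Rightarrow> 'a set" where
  "commutator_class G g = {commutator G x g | x. x \<in> carrier G}"

text \<open>Lower central series: gamma_1 = G, gamma_(i+1) = [gamma_i, G] (indexed from 0 here).\<close>
fun lower_central :: "('a, 'b) monoid_scheme \<Rightarrow> nat \<Rightarrow> 'a set" where
  "lower_central G 0 = carrier G"
| "lower_central G (Suc n) =
     generate G {commutator G x y | x y. x \<in> lower_central G n \<and> y \<in> carrier G}"

definition nilpotent :: "('a, 'b) monoid_scheme \<Rightarrow> bool" where
  "nilpotent G \<longleftrightarrow> (\<exists>n. lower_central G n = {\<one>\<^bsub>G\<^esub>})"

definition finitely_generated :: "('a, 'b) monoid_scheme \<Rightarrow> bool" where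
  "finitely_generated G \<longleftrightarrow>
     (\<exists>S. finite S \<and> S \<subseteq> carrier G \<and> generate G S = carrier G)"

definition min_n :: "('a, 'b) monoid_scheme \<Rightarrow> bool" where
  "min_n G \<longleftrightarrow>
     (\<forall>H :: nat \<Rightarrow> 'a set. (\<forall>i. H i \<lhd> G) \<and> (\<forall>i. H (Suc i) \<subseteq> H i)
        \<longrightarrow> (\<exists>m. \<forall>k\<ge>m. H k = H m))"

end

theory Submission
  imports Defs
begin

text \<open>
  By Min-n the lower central series stops: \<open>\<gamma>\<^sub>m = \<gamma>\<^sub>m\<^sub>+\<^sub>1\<close>. Since \<open>G\<close> is finitely generated,
  every \<open>\<gamma>\<^sub>n\<close> is the normal closure of a finite set; let \<open>\<gamma>\<^sub>m\<close> be that of \<open>T\<close>. Then \<open>\<gamma>\<^sub>m\<^sub>+\<^sub>1 = [\<gamma>\<^sub>m, G]\<close> is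
  the normal closure of the sets \<open>[e]\<^sub>t\<close>, \<open>t \<in> T\<close>, which are normal subgroups, so every normal
  subgroup containing them contains \<open>T\<close>. Now \<open>a \<in> N [e]\<^sub>a\<close> forces \<open>a \<in> N\<close>: from
  \<open>a = n x\<^sup>-\<^sup>1 a\<^sup>-\<^sup>1 x a\<close> one reads off \<open>x\<^sup>-\<^sup>1 a x = n\<close>. This lets us discard the elements of \<open>T\<close>
  one at a time, so \<open>T = {1}\<close> and \<open>\<gamma>\<^sub>m = 1\<close>.
\<close>

text \<open>The preimage of the centre of \<open>G/M\<close>.\<close>

definition central_mod :: "('a, 'b) monoid_scheme \<Rightarrow> 'a set \<Rightarrow> 'a set" where
  "central_mod G M = {x \<in> carrier G. \<forall>y \<in> carrier G. commutator G x y \<in> M}"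

definition is_normal_closure :: "('a, 'b) monoid_scheme \<Rightarrow> 'a set \<Rightarrow> 'a set \<Rightarrow> bool" where
  "is_normal_closure G T N \<longleftrightarrow> N \<lhd> G \<and> T \<subseteq> N \<and> (\<forall>M. M \<lhd> G \<longrightarrow> T \<subseteq> M \<longrightarrow> N \<subseteq> M)"

context group
begin

lemma mult_inv_cancel_left [simp]: "x \<in> carrier G \<Longrightarrow> y \<in> carrier G \<Longrightarrow> x \<otimes> (inv x \<otimes> y) = y"
  by (simp add: m_assoc[symmetric])

lemma inv_mult_cancel_left [simp]: "x \<in> carrier G \<Longrightarrow> y \<in> carrier G \<Longrightarrow> inv x \<otimes> (x \<otimes> y) = y"
  by (simp add: m_assoc[symmetric])

lemma commutator_closed [simp]:
  "x \<in> carrier G \<Longrightarrow> y \<in> carrier G \<Longrightarrow> commutator G x y \<in> carrier G"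
  by (simp add: commutator_def)

lemma inv_commutator:
  "x \<in> carrier G \<Longrightarrow> y \<in> carrier G \<Longrightarrow> inv (commutator G x y) = commutator G y x"
  by (simp add: commutator_def m_assoc inv_mult_group)

lemma commutator_one_right: "x \<in> carrier G \<Longrightarrow> commutator G x \<one> = \<one>"
  by (simp add: commutator_def m_assoc)

lemma commutator_mult_left:
  "x \<in> carrier G \<Longrightarrow> y \<in> carrier G \<Longrightarrow> g \<in> carrier G \<Longrightarrow>
   commutator G (x \<otimes> y) g = inv y \<otimes> commutator G x g \<otimes> y \<otimes> commutator G y g"
  by (simp add: commutator_def m_assoc inv_mult_group)

lemma commutator_mult_right:
  "t \<in> carrier G \<Longrightarrow> y \<in> carrier G \<Longrightarrow> z \<in> carrier G \<Longrightarrow>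
   commutator G t (y \<otimes> z) = commutator G t z \<otimes> (inv z \<otimes> commutator G t y \<otimes> z)"
  by (simp add: commutator_def m_assoc inv_mult_group)

lemma commutator_inv_left:
  "x \<in> carrier G \<Longrightarrow> y \<in> carrier G \<Longrightarrow>
   commutator G (inv x) y = x \<otimes> inv (commutator G x y) \<otimes> inv x"
  by (simp add: commutator_def m_assoc inv_mult_group)

lemma commutator_inv_right:
  "t \<in> carrier G \<Longrightarrow> y \<in> carrier G \<Longrightarrow>
   commutator G t (inv y) = y \<otimes> inv (commutator G t y) \<otimes> inv y"
  by (simp add: commutator_def m_assoc inv_mult_group)

lemma conj_eq_mult_commutator:
  "x \<in> carrier G \<Longrightarrow> z \<in> carrier G \<Longrightarrow> z \<otimes> x \<otimes> inv z = x \<otimes> commutator G x (inv z)"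
  by (simp add: commutator_def m_assoc)

lemma conj_commutator:
  "g \<in> carrier G \<Longrightarrow> x \<in> carrier G \<Longrightarrow> y \<in> carrier G \<Longrightarrow>
   g \<otimes> commutator G x y \<otimes> inv g = commutator G (g \<otimes> x \<otimes> inv g) (g \<otimes> y \<otimes> inv g)"
  by (simp add: commutator_def m_assoc inv_mult_group)

lemma commutator_class_normal:
  assumes K: "subgroup (commutator_class G g) G" and g: "g \<in> carrier G"
  shows "commutator_class G g \<lhd> G"
  unfolding normal_inv_iff
proof (intro conjI K ballI)
  fix x h assume x: "x \<in> carrier G" and "h \<in> commutator_class G g"
  then obtain y where y: "y \<in> carrier G" "h = commutator G y g"
    unfolding commutator_class_def by blast
  have "x \<otimes> h \<otimes> inv x = commutator G (y \<otimes> inv x) g \<otimes> inv (commutator G (inv x) g)"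
    using commutator_mult_left[of y "inv x" g] x y g by (simp add: m_assoc)
  moreover have "commutator G (y \<otimes> inv x) g \<in> commutator_class G g"
    and "commutator G (inv x) g \<in> commutator_class G g"
    using x y unfolding commutator_class_def by blast+
  ultimately show "x \<otimes> h \<otimes> inv x \<in> commutator_class G g"
    using K by (simp add: subgroup.m_closed subgroup.m_inv_closed)
qed

lemma commutator_mem_normal:
  assumes M: "M \<lhd> G" and x: "x \<in> M" and y: "y \<in> carrier G"
  shows "commutator G x y \<in> M"
proof -
  have Ms: "subgroup M G" using M by (rule normal_imp_subgroup)
  have xc: "x \<in> carrier G" using subgroup.mem_carrier[OF Ms x] .
  have "inv x \<otimes> (inv y \<otimes> x \<otimes> y) \<in> M"
    using normal.inv_op_closed1[OF M y x] x Ms by (simp add: subgroup.m_closed subgroup.m_inv_closed)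
  then show ?thesis
    using xc y by (simp add: commutator_def m_assoc)
qed

lemma commutator_class_subset_iff:
  assumes M: "M \<lhd> G" and t: "t \<in> carrier G"
  shows "commutator_class G t \<subseteq> M \<longleftrightarrow> t \<in> central_mod G M"
proof -
  have inv_mem: "inv h \<in> M" if "h \<in> M" for h
    using subgroup.m_inv_closed[OF normal_imp_subgroup[OF M] that] .
  have "commutator G y t \<in> M \<longleftrightarrow> commutator G t y \<in> M" if y: "y \<in> carrier G" for y
    using inv_mem[of "commutator G y t"] inv_mem[of "commutator G t y"]
    by (auto simp: inv_commutator[OF y t] inv_commutator[OF t y])
  then show ?thesis
    using t unfolding commutator_class_def central_mod_def by blast
qed

lemma commutator_class_subset_normal:
  assumes M: "M \<lhd> G" and a: "a \<in> M"
  shows "commutator_class G a \<subseteq> M"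
proof -
  have ac: "a \<in> carrier G" using subgroup.mem_carrier[OF normal_imp_subgroup[OF M] a] .
  have "a \<in> central_mod G M"
    using commutator_mem_normal[OF M a] ac unfolding central_mod_def by blast
  then show ?thesis using commutator_class_subset_iff[OF M ac] by blast
qed

lemma central_mod_mult_closed:
  assumes M: "M \<lhd> G" and a: "a \<in> central_mod G M" and b: "b \<in> central_mod G M"
  shows "a \<otimes> b \<in> central_mod G M"
proof -
  have ac: "a \<in> carrier G" and bc: "b \<in> carrier G"
    using a b by (simp_all add: central_mod_def)
  have "commutator G (a \<otimes> b) y \<in> M" if y: "y \<in> carrier G" for y
  proof -
    have "inv b \<otimes> commutator G a y \<otimes> b \<in> M"
      using normal.inv_op_closed1[OF M bc] a y by (simp add: central_mod_def)
    then show ?thesis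
      using commutator_mult_left[OF ac bc y] b y normal_imp_subgroup[OF M]
      by (simp add: central_mod_def subgroup.m_closed)
  qed
  then show ?thesis using ac bc by (simp add: central_mod_def)
qed

lemma central_mod_normal:
  assumes M: "M \<lhd> G"
  shows "central_mod G M \<lhd> G"
proof -
  have Ms: "subgroup M G" using M by (rule normal_imp_subgroup)
  have inv_closed: "inv a \<in> central_mod G M" if a: "a \<in> central_mod G M" for a
  proof -
    have ac: "a \<in> carrier G" using a by (simp add: central_mod_def)
    have "commutator G (inv a) y \<in> M" if y: "y \<in> carrier G" for y
    proof -
      have "inv (commutator G a y) \<in> M"
        using a y subgroup.m_inv_closed[OF Ms] by (simp add: central_mod_def)
      then show ?thesis
        using normal.inv_op_closed1[OF M, of "inv a"] ac y by (simp add: commutator_inv_left)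
    qed
    then show ?thesis using ac by (simp add: central_mod_def)
  qed
  have sub: "subgroup (central_mod G M) G"
  proof (rule subgroupI)
    show "central_mod G M \<subseteq> carrier G" by (auto simp: central_mod_def)
    have "\<one> \<in> central_mod G M"
      using subgroup.one_closed[OF Ms] by (simp add: central_mod_def commutator_def)
    then show "central_mod G M \<noteq> {}" by blast
  qed (use inv_closed central_mod_mult_closed[OF M] in auto)
  show ?thesis unfolding normal_inv_iff
  proof (intro conjI sub ballI)
    fix z a assume z: "z \<in> carrier G" and a: "a \<in> central_mod G M"
    have ac: "a \<in> carrier G" using a by (simp add: central_mod_def)
    have "commutator G a (inv z) \<in> M" using a z by (simp add: central_mod_def)
    then have "commutator G a (inv z) \<in> central_mod G M"
      using commutator_mem_normal[OF M] subgroup.mem_carrier[OF Ms] by (simp add: central_mod_def)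
    then show "z \<otimes> a \<otimes> inv z \<in> central_mod G M"
      using central_mod_mult_closed[OF M a] conj_eq_mult_commutator[OF ac z] by simp
  qed
qed

lemma commutator_right_preimage_subgroup:
  assumes M: "M \<lhd> G" and t: "t \<in> carrier G"
  shows "subgroup {y \<in> carrier G. commutator G t y \<in> M} G"
proof -
  have Ms: "subgroup M G" using M by (rule normal_imp_subgroup)
  show ?thesis
  proof (rule subgroupI)
    show "{y \<in> carrier G. commutator G t y \<in> M} \<noteq> {}"
      using subgroup.one_closed[OF Ms] t by (auto simp: commutator_one_right)
  next
    fix y assume y: "y \<in> {y \<in> carrier G. commutator G t y \<in> M}"
    then have "y \<otimes> inv (commutator G t y) \<otimes> inv y \<in> M"
      using normal.inv_op_closed2[OF M] subgroup.m_inv_closed[OF Ms] by simp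
    then show "inv y \<in> {y \<in> carrier G. commutator G t y \<in> M}"
      using y t by (simp add: commutator_inv_right)
  next
    fix y z
    assume y: "y \<in> {y \<in> carrier G. commutator G t y \<in> M}"
      and z: "z \<in> {y \<in> carrier G. commutator G t y \<in> M}"
    then have "commutator G t z \<otimes> (inv z \<otimes> commutator G t y \<otimes> z) \<in> M"
      using normal.inv_op_closed1[OF M] subgroup.m_closed[OF Ms] by simp
    then show "y \<otimes> z \<in> {y \<in> carrier G. commutator G t y \<in> M}"
      using y z t by (simp add: commutator_mult_right)
  qed auto
qed

lemma mem_central_mod_iff_generators:
  assumes M: "M \<lhd> G" and S: "S \<subseteq> carrier G" "generate G S = carrier G"
    and t: "t \<in> carrier G"
  shows "t \<in> central_mod G M \<longleftrightarrow> (\<forall>s \<in> S. commutator G t s \<in> M)"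
proof
  assume "\<forall>s \<in> S. commutator G t s \<in> M"
  then have "generate G S \<subseteq> {y \<in> carrier G. commutator G t y \<in> M}"
    using S(1) commutator_right_preimage_subgroup[OF M t] by (intro generate_subgroup_incl) auto
  then show "t \<in> central_mod G M" using S(2) t by (auto simp: central_mod_def)
qed (use S(1) in \<open>auto simp: central_mod_def\<close>)

lemma is_normal_closure_subset_iff:
  "is_normal_closure G T N \<Longrightarrow> M \<lhd> G \<Longrightarrow> N \<subseteq> M \<longleftrightarrow> T \<subseteq> M"
  unfolding is_normal_closure_def by blast

lemma lower_central_normal: "lower_central G n \<lhd> G"
proof (induction n)
  case 0
  show ?case by (simp add: normal_self)
next
  case (Suc n)
  have sub: "lower_central G n \<subseteq> carrier G"
    using subgroup.subset[OF normal_imp_subgroup[OF Suc]] .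
  show ?case unfolding lower_central.simps
  proof (rule normal_generateI)
    show "{commutator G x y |x y. x \<in> lower_central G n \<and> y \<in> carrier G} \<subseteq> carrier G"
      using sub by auto
  next
    fix h g
    assume "h \<in> {commutator G x y |x y. x \<in> lower_central G n \<and> y \<in> carrier G}"
      and g: "g \<in> carrier G"
    then obtain x y where xy: "h = commutator G x y" "x \<in> lower_central G n" "y \<in> carrier G"
      by blast
    have "g \<otimes> x \<otimes> inv g \<in> lower_central G n"
      using normal.inv_op_closed2[OF Suc g xy(2)] .
    moreover have "g \<otimes> h \<otimes> inv g = commutator G (g \<otimes> x \<otimes> inv g) (g \<otimes> y \<otimes> inv g)"
      using conj_commutator[OF g _ xy(3)] xy sub by auto
    ultimately show "g \<otimes> h \<otimes> inv g \<in> {commutator G x y |x y. x \<in> lower_central G n \<and> y \<in> carrier G}"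
      using g xy(3) by blast
  qed
qed

lemma lower_central_subset_carrier: "lower_central G n \<subseteq> carrier G"
  using subgroup.subset[OF normal_imp_subgroup[OF lower_central_normal]] .

lemma lower_central_Suc_subset_iff:
  assumes M: "M \<lhd> G"
  shows "lower_central G (Suc n) \<subseteq> M \<longleftrightarrow> lower_central G n \<subseteq> central_mod G M"
proof
  assume "lower_central G (Suc n) \<subseteq> M"
  then show "lower_central G n \<subseteq> central_mod G M"
    using lower_central_subset_carrier unfolding central_mod_def by (auto intro: generate.incl)
next
  assume "lower_central G n \<subseteq> central_mod G M"
  then show "lower_central G (Suc n) \<subseteq> M"
    unfolding lower_central.simps central_mod_def
    by (intro generate_subgroup_incl normal_imp_subgroup[OF M]) auto
qed

lemma lower_central_Suc_subset: "lower_central G (Suc n) \<subseteq> lower_central G n"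
proof -
  have "lower_central G n \<subseteq> central_mod G (lower_central G n)"
    using commutator_mem_normal[OF lower_central_normal] lower_central_subset_carrier
    unfolding central_mod_def by blast
  then show ?thesis using lower_central_Suc_subset_iff[OF lower_central_normal] by blast
qed

lemma lower_central_finite_normal_closure:
  assumes S: "finite S" "S \<subseteq> carrier G" "generate G S = carrier G"
  shows "\<exists>T. finite T \<and> is_normal_closure G T (lower_central G n)"
proof (induction n)
  case 0
  have "carrier G \<subseteq> M" if "M \<lhd> G" "S \<subseteq> M" for M
    using generate_subgroup_incl[OF that(2) normal_imp_subgroup[OF that(1)]] S(3) by simp
  then have "is_normal_closure G S (carrier G)"
    using S(2) unfolding is_normal_closure_def by (auto simp: normal_self)
  then show ?case using S(1) by auto
next
  case (Suc n)
  then obtain T where T: "finite T" "is_normal_closure G T (lower_central G n)" by blast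
  have Tc: "T \<subseteq> carrier G"
    using T(2) lower_central_subset_carrier unfolding is_normal_closure_def by blast
  define T' where "T' = (\<lambda>(t, s). commutator G t s) ` (T \<times> S)"
  have "T' \<subseteq> M \<longleftrightarrow> lower_central G (Suc n) \<subseteq> M" if M: "M \<lhd> G" for M
  proof -
    have "T' \<subseteq> M \<longleftrightarrow> T \<subseteq> central_mod G M"
      using mem_central_mod_iff_generators[OF M S(2,3)] Tc unfolding T'_def by auto
    also have "\<dots> \<longleftrightarrow> lower_central G (Suc n) \<subseteq> M"
      using is_normal_closure_subset_iff[OF T(2) central_mod_normal[OF M]]
        lower_central_Suc_subset_iff[OF M] by simp
    finally show ?thesis .
  qed
  then have "is_normal_closure G T' (lower_central G (Suc n))"
    using lower_central_normal unfolding is_normal_closure_def by blast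
  moreover have "finite T'" unfolding T'_def using T(1) S(1) by simp
  ultimately show ?case by blast
qed

lemma mem_normal_of_mem_set_mult_commutator_class:
  assumes a: "a \<in> carrier G" and N: "N \<lhd> G" and h: "a \<in> N <#> commutator_class G a"
  shows "a \<in> N"
proof -
  obtain n x where n: "n \<in> N" and x: "x \<in> carrier G" and a_eq: "a = n \<otimes> commutator G x a"
    using h unfolding set_mult_def commutator_class_def by blast
  have nc: "n \<in> carrier G" using subgroup.mem_carrier[OF normal_imp_subgroup[OF N] n] .
  have "a = (n \<otimes> (inv x \<otimes> inv a \<otimes> x)) \<otimes> a"
    using a_eq a x nc by (simp add: commutator_def m_assoc)
  then have "n \<otimes> (inv x \<otimes> inv a \<otimes> x) = \<one>"
    using r_cancel_one' a x nc by simp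
  then have "inv x \<otimes> a \<otimes> x = n"
    using inv_equality[of n "inv x \<otimes> inv a \<otimes> x"] a x nc by (simp add: inv_mult_group m_assoc)
  then have "x \<otimes> n \<otimes> inv x = a" using a x by (auto simp: m_assoc)
  then show "a \<in> N" using normal.inv_op_closed2[OF N x n] by simp
qed

lemma set_mult_normal_supset:
  assumes N: "N \<lhd> G" and K: "K \<lhd> G"
  shows "N \<subseteq> N <#> K" and "K \<subseteq> N <#> K"
proof -
  have N1: "\<one> \<in> N" and K1: "\<one> \<in> K"
    using N K by (simp_all add: normal_imp_subgroup subgroup.one_closed)
  have "n \<otimes> \<one> \<in> N <#> K" if "n \<in> N" for n
    using that K1 unfolding set_mult_def by blast
  moreover have "\<one> \<otimes> k \<in> N <#> K" if "k \<in> K" for k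
    using that N1 unfolding set_mult_def by blast
  moreover have "N \<subseteq> carrier G" "K \<subseteq> carrier G"
    using N K by (simp_all add: normal_imp_subgroup subgroup.subset)
  ultimately show "N \<subseteq> N <#> K" "K \<subseteq> N <#> K" by (auto simp: subset_iff)
qed

lemma trivial_if_in_normal_closure_of_commutator_classes:
  assumes K: "\<forall>g \<in> carrier G. subgroup (commutator_class G g) G"
    and fin: "finite T" and Tc: "T \<subseteq> carrier G"
    and closure: "\<forall>N. N \<lhd> G \<longrightarrow> (\<forall>t \<in> T. commutator_class G t \<subseteq> N) \<longrightarrow> T \<subseteq> N"
  shows "T \<subseteq> {\<one>}"
  using fin Tc closure
proof (induction T rule: finite_induct)
  case empty
  then show ?case by simp
next
  case (insert a T)
  have ac: "a \<in> carrier G" using insert.prems(1) by simp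
  have Ka: "commutator_class G a \<lhd> G" using commutator_class_normal K ac by simp
  have a_mem: "a \<in> N" if N: "N \<lhd> G" and hN: "\<forall>t \<in> T. commutator_class G t \<subseteq> N" for N
  proof -
    have "\<forall>t \<in> insert a T. commutator_class G t \<subseteq> N <#> commutator_class G a"
      using hN set_mult_normal_supset[OF N Ka] by blast
    then have "a \<in> N <#> commutator_class G a"
      using insert.prems(2) normal_subgroup_set_mult_closed[OF N Ka] by blast
    then show "a \<in> N" by (rule mem_normal_of_mem_set_mult_commutator_class[OF ac N])
  qed
  have "T \<subseteq> {\<one>}"
  proof (rule insert.IH)
    show "T \<subseteq> carrier G" using insert.prems(1) by simp
    show "\<forall>N. N \<lhd> G \<longrightarrow> (\<forall>t \<in> T. commutator_class G t \<subseteq> N) \<longrightarrow> T \<subseteq> N"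
      using a_mem commutator_class_subset_normal insert.prems(2) by blast
  qed
  moreover have "a \<in> {\<one>}"
  proof (rule a_mem[OF one_is_normal])
    show "\<forall>t \<in> T. commutator_class G t \<subseteq> {\<one>}"
      using \<open>T \<subseteq> {\<one>}\<close> commutator_class_subset_normal[OF one_is_normal] by blast
  qed
  ultimately show ?case by simp
qed

end

theorem corollary3:
  fixes G :: "('a, 'b) monoid_scheme"
  assumes "group G"
    and "finitely_generated G"
    and "\<forall>g \<in> carrier G. subgroup (commutator_class G g) G"
    and "min_n G"
  shows "nilpotent G"
proof -
  interpret group G by fact
  have "\<exists>m. \<forall>k \<ge> m. lower_central G k = lower_central G m"
    using assms(4) lower_central_normal lower_central_Suc_subset unfolding min_n_def by blast
  then obtain m where m: "lower_central G (Suc m) = lower_central G m"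
    using le_SucI by blast
  obtain S where S: "finite S" "S \<subseteq> carrier G" "generate G S = carrier G"
    using assms(2) unfolding finitely_generated_def by blast
  obtain T where T: "finite T" "is_normal_closure G T (lower_central G m)"
    using lower_central_finite_normal_closure[OF S] by blast
  have Tc: "T \<subseteq> carrier G"
    using T(2) lower_central_subset_carrier unfolding is_normal_closure_def by blast
  have "T \<subseteq> N" if N: "N \<lhd> G" and "\<forall>t \<in> T. commutator_class G t \<subseteq> N" for N
  proof -
    have "lower_central G m \<subseteq> central_mod G N"
      using that Tc commutator_class_subset_iff[OF N]
        is_normal_closure_subset_iff[OF T(2) central_mod_normal[OF N]] by blast
    then show ?thesis
      using lower_central_Suc_subset_iff[OF N] m T(2) unfolding is_normal_closure_def by blast
  qed
  then have "T \<subseteq> {\<one>\<^bsub>G\<^esub>}"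
    using trivial_if_in_normal_closure_of_commutator_classes[OF assms(3) T(1) Tc] by blast
  then have "lower_central G m = {\<one>\<^bsub>G\<^esub>}"
    using T(2) one_is_normal subgroup.one_closed[OF normal_imp_subgroup[OF lower_central_normal]]
    unfolding is_normal_closure_def by blast
  then show ?thesis unfolding nilpotent_def by blast
qed

end
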